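(* Let $\mathbf A$ and $\mathbf B$ be t-algebras of type $\tau$ with traces $\mathsf a$ and $\mathsf b$. The following are equivalent: (1) $\mathbf B\in\mathrm V_E(\mathbf A)$ and the natural homomorphism $t^{\mathbf A}\mapsto t^{\mathbf B}$ from $\mathbf A^\uparrow$ onto $\mathbf B^\uparrow$ is uniformly continuous; (2) for every $s\in\mathsf b$, the t-subalgebra $\mathbf B_{\bar s}$ of $\mathbf B$ generated by $s$ is a t-homomorphic image of a t-subalgebra of a finite t-power of $\mathbf A$.
   Context: $\mathbb N=\{1,2,\dots\}$. A thread on $A$ is $s\in A^{\mathbb N}$; $r[a_1,\dots,a_n]$ is the thread with entries $a_i$ for $i\le n$ and $r_i$ for $i>n$; $r\equiv_{\mathbb N}s$ iff $\{i:r_i\neq s_i\}$ is finite, $[s]_{\mathbb N}$ its class. A trace on $A$ is a nonempty union of $\equiv_{\mathbb N}$-classes. A t-algebra of type $\tau$ and trace $\mathsf a$ is $(A,\mathsf a,\sigma^{\mathbf A})_{\sigma\in\tau}$ with $\sigma^{\mathbf A}:\mathsf a\to A$ arbitrary. t-subalgebra: $(C,\mathsf c,\sigma^{\mathbf A}|_{\mathsf c})$ with $C\subseteq A$, $\mathsf c\subseteq\mathsf a$ a trace on $C$, $\sigma^{\mathbf A}(\mathsf c)\subseteq C$. t-homomorphism: $h:A\to B$ with $h^{\mathbb N}(\mathsf a)\subseteq\mathsf b$ ($h^{\mathbb N}$ coordinatewise) and $h\circ\sigma^{\mathbf A}=\sigma^{\mathbf B}\circ h^{\mathbb N}$ on $\mathsf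 a$; onto (t-homomorphic image) if $h$ and $h^{\mathbb N}:\mathsf a\to\mathsf b$ are surjective. Finite t-power $\mathbf A^n$: universe $A^n$, trace $\mathsf a^n$ (a tuple $(r^1,\dots,r^n)$ of threads identified with the thread of entries $(r^1_i,\dots,r^n_i)$), operations componentwise. $\tau$-terms: least set containing $\mathsf e_1,\mathsf e_2,\dots$ and $\sigma(t_1,\dots,t_n,\mathsf e_{n+1},\dots)$; term operations $\mathsf e_i^{\mathbf A}(s)=s_i$, $\sigma(t_1,\dots,t_n,\mathsf e_{n+1},\dots)^{\mathbf A}(s)=\sigma^{\mathbf A}(s[t_1^{\mathbf A}(s),\dots,t_n^{\mathbf A}(s)])$; $\theta_{\mathbf A}=\{(t,u):t^{\mathbf A}=u^{\mathbf A}\}$; $\mathrm V_E(\mathbf A)=\{\mathbf B:\theta_{\mathbf A}\subseteq\theta_{\mathbf B}\}$ (the Et-variety generated by $\mathbf A$). $\mathbf B_{\bar s}$ ($s\in\mathsf b$): universe $\{t^{\mathbf B}(s)\}$, trace $[s]_{\mathbb N}\cap(B_{\bar s})^{\mathbb N}$. The term clone algebra $\mathbf A^\uparrow$ is the set $\{t^{\mathbf A}\}$ of term operations with $\mathsf e_i=\mathsf e_i^{\mathbf A}$, $\sigma=\sigma^{\mathbf A}$ and $q_n(\varphi,\psi_1,\dots,\psi_n)(s)=\varphi(s[\psi_1(s),\dots,\psi_n(s)])$. The natural homomorphism $t^{\mathbf A}\mapsto t^{\mathbf B}$ is uniformly continuous if for every $s\in\mathsf b$ there exist $n$ and $r^1,\dots,r^n\in\mathsf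 a$ such that for all $\tau$-terms $t,u$: $t^{\mathbf A}(r^j)=u^{\mathbf A}(r^j)$ for all $j\le n$ implies $t^{\mathbf B}(s)=u^{\mathbf B}(s)$. *)

theory Defs
  imports Main
begin

text \<open>Threads are functions nat => 'a; paper index i (from 1) is index i-1 here.\<close>

definition threads :: "'a set \<Rightarrow> (nat \<Rightarrow> 'a) set" where
  "threads A = {s. \<forall>i. s i \<in> A}"

definition eqN :: "(nat \<Rightarrow> 'a) \<Rightarrow> (nat \<Rightarrow> 'a) \<Rightarrow> bool" where
  "eqN r s \<longleftrightarrow> finite {i. r i \<noteq> s i}"

definition is_trace :: "'a set \<Rightarrow> (nat \<Rightarrow> 'a) set \<Rightarrow> bool" where
  "is_trace A a \<longleftrightarrow> a \<noteq> {} \<and> a \<subseteq> threads A \<and>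
     (\<forall>r\<in>a. \<forall>s\<in>threads A. eqN r s \<longrightarrow> s \<in> a)"

definition talg :: "'a set \<Rightarrow> (nat \<Rightarrow> 'a) set \<Rightarrow> ('f \<Rightarrow> (nat \<Rightarrow> 'a) \<Rightarrow> 'a) \<Rightarrow> bool" where
  "talg A a F \<longleftrightarrow> is_trace A a \<and> (\<forall>\<sigma>. \<forall>s\<in>a. F \<sigma> s \<in> A)"

definition upd :: "(nat \<Rightarrow> 'a) \<Rightarrow> 'a list \<Rightarrow> nat \<Rightarrow> 'a" where
  "upd s xs = (\<lambda>i. if i < length xs then xs ! i else s i)"

text \<open>Terms: Var i is e_(i+1); App f [t1..tn] is f(t1,...,tn,e_(n+1),...).\<close>
datatype 'f trm = Var nat | App 'f "'f trm list"

fun eval :: "('f \<Rightarrow> (nat \<Rightarrow> 'a) \<Rightarrow> 'a) \<Rightarrow> 'f trm \<Rightarrow> (nat \<Rightarrow> 'a) \<Rightarrow> 'a" where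
  "eval F (Var i) s = s i"
| "eval F (App f ts) s = F f (upd s (map (\<lambda>t. eval F t s) ts))"

definition term_eq :: "(nat \<Rightarrow> 'a) set \<Rightarrow> ('f \<Rightarrow> (nat \<Rightarrow> 'a) \<Rightarrow> 'a) \<Rightarrow> 'f trm \<Rightarrow> 'f trm \<Rightarrow> bool" where
  "term_eq a F t u \<longleftrightarrow> (\<forall>s\<in>a. eval F t s = eval F u s)"

definition in_VE :: "(nat \<Rightarrow> 'a) set \<Rightarrow> ('f \<Rightarrow> (nat \<Rightarrow> 'a) \<Rightarrow> 'a) \<Rightarrow>
    (nat \<Rightarrow> 'b) set \<Rightarrow> ('f \<Rightarrow> (nat \<Rightarrow> 'b) \<Rightarrow> 'b) \<Rightarrow> bool" where
  "in_VE a F b G \<longleftrightarrow> (\<forall>t u. term_eq a F t u \<longrightarrow> term_eq b G t u)"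

definition unif_cont :: "(nat \<Rightarrow> 'a) set \<Rightarrow> ('f \<Rightarrow> (nat \<Rightarrow> 'a) \<Rightarrow> 'a) \<Rightarrow>
    (nat \<Rightarrow> 'b) set \<Rightarrow> ('f \<Rightarrow> (nat \<Rightarrow> 'b) \<Rightarrow> 'b) \<Rightarrow> bool" where
  "unif_cont a F b G \<longleftrightarrow> (\<forall>s\<in>b. \<exists>rs. set rs \<subseteq> a \<and>
     (\<forall>t u. (\<forall>r\<in>set rs. eval F t r = eval F u r) \<longrightarrow> eval G t s = eval G u s))"

definition tsub :: "'a set \<Rightarrow> (nat \<Rightarrow> 'a) set \<Rightarrow> ('f \<Rightarrow> (nat \<Rightarrow> 'a) \<Rightarrow> 'a) \<Rightarrow>
    'a set \<Rightarrow> (nat \<Rightarrow> 'a) set \<Rightarrow> bool" where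
  "tsub A a F C c \<longleftrightarrow> C \<subseteq> A \<and> c \<subseteq> a \<and> is_trace C c \<and> (\<forall>\<sigma>. \<forall>s\<in>c. F \<sigma> s \<in> C)"

definition thom_onto :: "'a set \<Rightarrow> (nat \<Rightarrow> 'a) set \<Rightarrow> ('f \<Rightarrow> (nat \<Rightarrow> 'a) \<Rightarrow> 'a) \<Rightarrow>
    'b set \<Rightarrow> (nat \<Rightarrow> 'b) set \<Rightarrow> ('f \<Rightarrow> (nat \<Rightarrow> 'b) \<Rightarrow> 'b) \<Rightarrow> ('a \<Rightarrow> 'b) \<Rightarrow> bool" where
  "thom_onto A a F B b G h \<longleftrightarrow>
     (\<forall>x\<in>A. h x \<in> B) \<and> (\<forall>s\<in>a. h \<circ> s \<in> b) \<and>
     (\<forall>\<sigma>. \<forall>s\<in>a. h (F \<sigma> s) = G \<sigma> (h \<circ> s)) \<and>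
     h ` A = B \<and> (\<lambda>s. h \<circ> s) ` a = b"

definition pow_univ :: "'a set \<Rightarrow> nat \<Rightarrow> 'a list set" where
  "pow_univ A n = {xs. length xs = n \<and> set xs \<subseteq> A}"

definition pow_trace :: "(nat \<Rightarrow> 'a) set \<Rightarrow> nat \<Rightarrow> (nat \<Rightarrow> 'a list) set" where
  "pow_trace a n = {(\<lambda>i. map (\<lambda>j. r j i) [0..<n]) | r. \<forall>j<n. r j \<in> a}"

definition pow_ops :: "('f \<Rightarrow> (nat \<Rightarrow> 'a) \<Rightarrow> 'a) \<Rightarrow> nat \<Rightarrow> 'f \<Rightarrow> (nat \<Rightarrow> 'a list) \<Rightarrow> 'a list" where
  "pow_ops F n \<sigma> w = map (\<lambda>j. F \<sigma> (\<lambda>i. w i ! j)) [0..<n]"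

definition gen_univ :: "('f \<Rightarrow> (nat \<Rightarrow> 'b) \<Rightarrow> 'b) \<Rightarrow> (nat \<Rightarrow> 'b) \<Rightarrow> 'b set" where
  "gen_univ G s = range (\<lambda>t. eval G t s)"

definition gen_trace :: "('f \<Rightarrow> (nat \<Rightarrow> 'b) \<Rightarrow> 'b) \<Rightarrow> (nat \<Rightarrow> 'b) \<Rightarrow> (nat \<Rightarrow> 'b) set" where
  "gen_trace G s = {r. eqN s r \<and> r \<in> threads (gen_univ G s)}"

end

theory Submission
  imports Defs
begin

text \<open>If t(s) is determined by the values t(r_1), ..., t(r_n) at threads of A, then
  t(R) \<mapsto> t(s) is a well-defined onto t-homomorphism from the t-subalgebra of A^n generated
  by the thread R = (r_1, ..., r_n) to B_s. Conversely, if B_s is the image of a t-subalgebra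
  of A^n, pick a preimage R of s; since term operations commute with t-homomorphisms and are
  computed coordinatewise in A^n, t(s) is determined by t at the n coordinate threads of R.\<close>

lemma eqN_refl: "eqN s s"
  by (simp add: eqN_def)

lemma eqN_trans: "eqN r s \<Longrightarrow> eqN s u \<Longrightarrow> eqN r u"
  unfolding eqN_def
  by (rule finite_subset[of _ "{i. r i \<noteq> s i} \<union> {i. s i \<noteq> u i}"]) auto

lemma eqN_upd: "eqN s (upd s xs)"
  unfolding eqN_def by (rule finite_subset[of _ "{..<length xs}"]) (auto simp: upd_def)

lemma upd_in_threads: "s \<in> threads X \<Longrightarrow> set xs \<subseteq> X \<Longrightarrow> upd s xs \<in> threads X"
  by (auto simp: threads_def upd_def)

lemma comp_upd: "h \<circ> upd s xs = upd (h \<circ> s) (map h xs)"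
  by (auto simp: upd_def)

lemma eqN_imp_upd_of_range:
  assumes "eqN s r" and "\<forall>i. r i \<in> range g"
  shows "\<exists>ts. r = upd s (map g ts)"
proof -
  obtain N where N: "\<And>i. s i \<noteq> r i \<Longrightarrow> i < N"
    using assms(1) unfolding eqN_def finite_nat_set_iff_bounded by blast
  define ts where "ts = map (\<lambda>i. SOME t. g t = r i) [0..<N]"
  have "\<exists>t. g t = r i" for i
    using assms(2) by (metis rangeE)
  then have "map g ts = map r [0..<N]"
    unfolding ts_def by (auto intro: someI_ex)
  moreover have "r = upd s (map r [0..<N])"
    using N by (force simp: upd_def)
  ultimately show ?thesis by metis
qed

lemma trace_upd:
  assumes "is_trace A a" "s \<in> a" "set xs \<subseteq> A"
  shows "upd s xs \<in> a"
  using assms eqN_upd upd_in_threads unfolding is_trace_def by blast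

lemma eval_in_univ:
  assumes "talg A a F" "s \<in> a"
  shows "eval F t s \<in> A"
proof (induction t)
  case (Var i)
  then show ?case using assms unfolding talg_def is_trace_def threads_def by auto
next
  case (App f ts)
  then have "upd s (map (\<lambda>t. eval F t s) ts) \<in> a"
    using assms by (intro trace_upd) (auto simp: talg_def)
  then show ?case using assms by (simp add: talg_def)
qed

lemma eval_hom:
  assumes "talg C c F" and hom: "\<forall>\<sigma>. \<forall>W\<in>c. h (F \<sigma> W) = G \<sigma> (h \<circ> W)" and "W \<in> c"
  shows "eval G t (h \<circ> W) = h (eval F t W)"
proof (induction t)
  case (Var i)
  then show ?case by simp
next
  case (App f ts)
  have "map (\<lambda>t. eval G t (h \<circ> W)) ts = map h (map (\<lambda>t. eval F t W) ts)"
    by (simp add: App.IH)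
  then have "eval G (App f ts) (h \<circ> W) = G f (h \<circ> upd W (map (\<lambda>t. eval F t W) ts))"
    by (simp only: eval.simps comp_upd)
  also have "\<dots> = h (eval F (App f ts) W)"
  proof -
    have "upd W (map (\<lambda>t. eval F t W) ts) \<in> c"
      using assms eval_in_univ[OF assms(1,3)] by (intro trace_upd) (auto simp: talg_def)
    then show ?thesis using hom by simp
  qed
  finally show ?case .
qed

lemma eval_pow_ops:
  assumes "\<forall>i. length (W i) = n"
  shows "eval (pow_ops F n) t W = map (\<lambda>j. eval F t (\<lambda>i. W i ! j)) [0..<n]"
proof (induction t)
  case (Var i)
  then show ?case using assms map_nth[of "W i"] by simp
next
  case (App f ts)
  have "(\<lambda>i. upd W (map (\<lambda>t. eval (pow_ops F n) t W) ts) i ! j)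
      = upd (\<lambda>i. W i ! j) (map (\<lambda>t. eval F t (\<lambda>i. W i ! j)) ts)" if "j < n" for j
    using App.IH that by (auto simp: upd_def)
  then show ?case
    unfolding eval.simps pow_ops_def[of F n f] by simp
qed

lemma eval_pow_ops_columns:
  "eval (pow_ops F n) t (\<lambda>i. map (\<lambda>j. r j i) [0..<n]) = map (\<lambda>j. eval F t (r j)) [0..<n]"
  by (subst eval_pow_ops) simp_all

lemma pow_trace_iff:
  "W \<in> pow_trace a n \<longleftrightarrow> (\<forall>i. length (W i) = n) \<and> (\<forall>j<n. (\<lambda>i. W i ! j) \<in> a)"
proof
  assume "W \<in> pow_trace a n"
  then show "(\<forall>i. length (W i) = n) \<and> (\<forall>j<n. (\<lambda>i. W i ! j) \<in> a)"
    unfolding pow_trace_def by auto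
next
  assume W: "(\<forall>i. length (W i) = n) \<and> (\<forall>j<n. (\<lambda>i. W i ! j) \<in> a)"
  then have "W = (\<lambda>i. map (\<lambda>j. W i ! j) [0..<n])"
    by (metis map_nth)
  then show "W \<in> pow_trace a n"
    using W unfolding pow_trace_def by (intro CollectI exI[of _ "\<lambda>j i. W i ! j"]) auto
qed

lemma talg_pow:
  assumes "talg A a F"
  shows "talg (pow_univ A n) (pow_trace a n) (pow_ops F n)"
proof -
  have trA: "is_trace A a" using assms by (simp add: talg_def)
  have in_A: "r \<in> a \<Longrightarrow> r i \<in> A" for r i
    using trA by (auto simp: is_trace_def threads_def)
  have "pow_trace a n \<subseteq> threads (pow_univ A n)"
    by (auto simp: pow_trace_iff threads_def pow_univ_def in_set_conv_nth) (metis in_A)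
  moreover obtain r0 where "r0 \<in> a"
    using trA unfolding is_trace_def by blast
  then have "(\<lambda>i. replicate n (r0 i)) \<in> pow_trace a n"
    by (simp add: pow_trace_iff)
  moreover have "W \<in> pow_trace a n"
    if R: "R \<in> pow_trace a n" and W: "W \<in> threads (pow_univ A n)" and "eqN R W" for R W
  proof -
    have "(\<lambda>i. W i ! j) \<in> a" if "j < n" for j
    proof -
      have "{i. R i ! j \<noteq> W i ! j} \<subseteq> {i. R i \<noteq> W i}"
        by auto
      then have "eqN (\<lambda>i. R i ! j) (\<lambda>i. W i ! j)"
        using \<open>eqN R W\<close> unfolding eqN_def by (rule finite_subset)
      moreover have "(\<lambda>i. W i ! j) \<in> threads A"
        using W \<open>j < n\<close> nth_mem unfolding threads_def pow_univ_def by fastforce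
      ultimately show ?thesis
        using trA R \<open>j < n\<close> unfolding is_trace_def pow_trace_iff by blast
    qed
    moreover have "length (W i) = n" for i
      using W unfolding threads_def pow_univ_def by auto
    ultimately show ?thesis unfolding pow_trace_iff by blast
  qed
  moreover have "pow_ops F n \<sigma> W \<in> pow_univ A n" if "W \<in> pow_trace a n" for \<sigma> W
    using that assms unfolding pow_trace_iff pow_univ_def pow_ops_def talg_def by auto
  ultimately show ?thesis unfolding talg_def is_trace_def by blast
qed

lemma self_in_gen_trace: "s \<in> gen_trace G s"
  unfolding gen_trace_def threads_def gen_univ_def
  by (auto simp: eqN_refl intro: range_eqI[of _ _ "Var _"])

lemma gen_trace_eq: "gen_trace G s = range (\<lambda>ts. upd s (map (\<lambda>t. eval G t s) ts))"
proof
  show "gen_trace G s \<subseteq> range (\<lambda>ts. upd s (map (\<lambda>t. eval G t s) ts))"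
  proof
    fix r assume "r \<in> gen_trace G s"
    then have "eqN s r" "\<forall>i. r i \<in> range (\<lambda>t. eval G t s)"
      unfolding gen_trace_def gen_univ_def threads_def by auto
    then show "r \<in> range (\<lambda>ts. upd s (map (\<lambda>t. eval G t s) ts))"
      using eqN_imp_upd_of_range by blast
  qed
  have "s \<in> threads (gen_univ G s)"
    using self_in_gen_trace[of s G] by (simp add: gen_trace_def)
  then show "range (\<lambda>ts. upd s (map (\<lambda>t. eval G t s) ts)) \<subseteq> gen_trace G s"
    unfolding gen_trace_def by (auto simp: eqN_upd gen_univ_def intro!: upd_in_threads)
qed

lemma tsub_gen:
  assumes "talg A a F" "R \<in> a"
  shows "tsub A a F (gen_univ F R) (gen_trace F R)"
proof -
  have trA: "is_trace A a" using assms(1) by (simp add: talg_def)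
  have "gen_univ F R \<subseteq> A"
    using eval_in_univ[OF assms] by (auto simp: gen_univ_def)
  then have "gen_trace F R \<subseteq> a"
    using trA assms(2) unfolding gen_trace_def is_trace_def threads_def by blast
  moreover have "is_trace (gen_univ F R) (gen_trace F R)"
    using self_in_gen_trace eqN_trans unfolding is_trace_def gen_trace_def by blast
  moreover have "F \<sigma> W \<in> gen_univ F R" if "W \<in> gen_trace F R" for \<sigma> W
    using that unfolding gen_trace_eq gen_univ_def by (auto intro: range_eqI[of _ _ "App \<sigma> _"])
  ultimately show ?thesis
    using \<open>gen_univ F R \<subseteq> A\<close> unfolding tsub_def by blast
qed

lemma thom_onto_gen:
  assumes determined: "\<And>t u. eval F t R = eval F u R \<Longrightarrow> eval G t s = eval G u s"
  shows "\<exists>h. thom_onto (gen_univ F R) (gen_trace F R) F (gen_univ G s) (gen_trace G s) G h"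
proof -
  define h where "h x = eval G (SOME t. eval F t R = x) s" for x
  have h_eval: "h (eval F t R) = eval G t s" for t
    unfolding h_def by (rule determined, rule someI) (rule refl)
  have h_R: "h \<circ> R = s"
    using h_eval[of "Var _"] by auto
  have h_upd: "h \<circ> upd R (map (\<lambda>t. eval F t R) ts) = upd s (map (\<lambda>t. eval G t s) ts)" for ts
    unfolding comp_upd h_R map_map by (simp add: comp_def h_eval)
  have "h ` gen_univ F R = gen_univ G s"
    by (auto simp: gen_univ_def image_image h_eval)
  moreover have "(\<lambda>W. h \<circ> W) ` gen_trace F R = gen_trace G s"
    unfolding gen_trace_eq image_image h_upd ..
  moreover have "h (F \<sigma> W) = G \<sigma> (h \<circ> W)" if "W \<in> gen_trace F R" for \<sigma> W
    using that h_eval[of "App \<sigma> _"] unfolding gen_trace_eq by (auto simp: h_upd)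
  ultimately show ?thesis
    unfolding thom_onto_def by blast
qed

lemma pow_image_imp_determined:
  assumes tsub: "tsub (pow_univ A n) (pow_trace a n) (pow_ops F n) C c"
    and hom: "thom_onto C c (pow_ops F n) (gen_univ G s) (gen_trace G s) G h"
  shows "\<exists>rs. set rs \<subseteq> a \<and>
    (\<forall>t u. (\<forall>r\<in>set rs. eval F t r = eval F u r) \<longrightarrow> eval G t s = eval G u s)"
proof -
  have "s \<in> (\<lambda>W. h \<circ> W) ` c"
    using hom self_in_gen_trace[of s G] unfolding thom_onto_def by simp
  then obtain W where "W \<in> c" and s: "s = h \<circ> W"
    by blast
  then obtain r where W: "W = (\<lambda>i. map (\<lambda>j. r j i) [0..<n])" and r: "\<forall>j<n. r j \<in> a"
    using tsub unfolding tsub_def pow_trace_def by blast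
  have "talg C c (pow_ops F n)"
    using tsub by (simp add: tsub_def talg_def)
  then have "eval G t s = h (eval (pow_ops F n) t W)" for t
    unfolding s using hom \<open>W \<in> c\<close> by (intro eval_hom) (auto simp: thom_onto_def)
  then have eval_s: "eval G t s = h (map (\<lambda>j. eval F t (r j)) [0..<n])" for t
    unfolding W eval_pow_ops_columns .
  have "eval G t s = eval G u s" if "\<forall>j<n. eval F t (r j) = eval F u (r j)" for t u
  proof -
    have "map (\<lambda>j. eval F t (r j)) [0..<n] = map (\<lambda>j. eval F u (r j)) [0..<n]"
      using that by simp
    then show ?thesis
      unfolding eval_s by (rule arg_cong)
  qed
  then show ?thesis
    using r by (intro exI[of _ "map r [0..<n]"]) auto
qed

lemma unif_cont_imp_in_VE: "unif_cont a F b G \<Longrightarrow> in_VE a F b G"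
  unfolding unif_cont_def in_VE_def term_eq_def by (metis subsetD)

lemma determined_imp_pow_image:
  assumes "talg A a F" and "set rs \<subseteq> a"
    and determined: "\<And>t u. \<forall>r\<in>set rs. eval F t r = eval F u r \<Longrightarrow> eval G t s = eval G u s"
  shows "\<exists>n (C :: 'a list set) c h.
    tsub (pow_univ A n) (pow_trace a n) (pow_ops F n) C c \<and>
    thom_onto C c (pow_ops F n) (gen_univ G s) (gen_trace G s) G h"
proof -
  define n where "n = length rs"
  define R where "R = (\<lambda>i. map (\<lambda>j. (rs ! j) i) [0..<n])"
  have "R \<in> pow_trace a n"
    using assms(2) unfolding R_def n_def pow_trace_def by (auto intro!: exI[of _ "(!) rs"])
  moreover have "eval G t s = eval G u s"
    if "eval (pow_ops F n) t R = eval (pow_ops F n) u R" for t u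
  proof -
    have "map (\<lambda>j. eval F t (rs ! j)) [0..<n] = map (\<lambda>j. eval F u (rs ! j)) [0..<n]"
      using that unfolding R_def eval_pow_ops_columns .
    then have "\<forall>r\<in>set rs. eval F t r = eval F u r"
      by (auto simp: n_def in_set_conv_nth)
    then show ?thesis
      by (rule determined)
  qed
  ultimately show ?thesis
    using tsub_gen[OF talg_pow[OF assms(1)]] thom_onto_gen[of "pow_ops F n" R G s] by blast
qed

theorem mainTheorem19:
  fixes A :: "'a set" and a :: "(nat \<Rightarrow> 'a) set" and F :: "'f \<Rightarrow> (nat \<Rightarrow> 'a) \<Rightarrow> 'a"
    and B :: "'b set" and b :: "(nat \<Rightarrow> 'b) set" and G :: "'f \<Rightarrow> (nat \<Rightarrow> 'b) \<Rightarrow> 'b"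
  assumes "talg A a F" and "talg B b G"
  shows "(in_VE a F b G \<and> unif_cont a F b G) \<longleftrightarrow>
    (\<forall>s\<in>b. \<exists>n (C :: 'a list set) c (h :: 'a list \<Rightarrow> 'b).
        tsub (pow_univ A n) (pow_trace a n) (pow_ops F n) C c \<and>
        thom_onto C c (pow_ops F n) (gen_univ G s) (gen_trace G s) G h)"
proof
  assume "in_VE a F b G \<and> unif_cont a F b G"
  then show "\<forall>s\<in>b. \<exists>n (C :: 'a list set) c (h :: 'a list \<Rightarrow> 'b).
        tsub (pow_univ A n) (pow_trace a n) (pow_ops F n) C c \<and>
        thom_onto C c (pow_ops F n) (gen_univ G s) (gen_trace G s) G h"
    unfolding unif_cont_def using determined_imp_pow_image[OF assms(1)] by blast
next
  assume "\<forall>s\<in>b. \<exists>n (C :: 'a list set) c (h :: 'a list \<Rightarrow> 'b).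
        tsub (pow_univ A n) (pow_trace a n) (pow_ops F n) C c \<and>
        thom_onto C c (pow_ops F n) (gen_univ G s) (gen_trace G s) G h"
  then have "unif_cont a F b G"
    unfolding unif_cont_def using pow_image_imp_determined by blast
  then show "in_VE a F b G \<and> unif_cont a F b G"
    using unif_cont_imp_in_VE by blast
qed

end
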